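(* Let $e\ge3$ be odd, $m\in\mathbb N$, $t\in\{0,1\}$, and $\mathbf c=(t+(1-e)/2,0)$. Then the vertex $|(\emptyset,1^m),\mathbf c\rangle$ of the crystal graph $\mathcal G_{\mathbf c,e}$ is a highest weight vertex if and only if $e\mid 2m+t$ or $e\mid 2m+t-1$.
   Context: Crystal graph $\mathcal G_{\mathbf c,e}$ for $\mathbf c=(c_1,c_2)\in\mathbb Z^2$: vertices are $|\mu,\mathbf c\rangle$ for all bipartitions $\mu=(\mu^1,\mu^2)$. A node of $\mu$ is $(a,b,j)$ with $(a,b)$ (row $a$, column $b$) in the Young diagram of $\mu^j$; content $b-a+c_j$, residue = content mod $e$. A node $\gamma$ is addable (resp. removable) if $\mu\cup\{\gamma\}$ (resp. $\mu\setminus\{\gamma\}$) is a bipartition. For $i\in\{0,\dots,e-1\}$ order the addable and removable $i$-nodes by $\gamma\prec\gamma'$ iff $\mathrm{cont}(\gamma)<\mathrm{cont}(\gamma')$ or contents equal and $j>j'$; write them in increasing order as a word in $A$ (addable), $R$ (removable), and delete recursively consecutive $RA$, giving $A^\alpha R^\beta$; if $\alpha>0$, the good addable $i$-node is that of the rightmost $A$. Edge $|\mu,\mathbf c\rangle\xrightarrow{i}|\nu,\mathbf c\rangle$ iff $\nu$ is $\mu$ plus its good addable $i$-node. A highest weight vertex is a vertex with no incoming edges. *)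

theory Defs
  imports Main "HOL-Library.Product_Lexorder"
begin

definition is_partition :: "nat list \<Rightarrow> bool" where
  "is_partition l \<longleftrightarrow> sorted_wrt (\<ge>) l \<and> 0 \<notin> set l"

type_synonym bipartition = "nat list \<times> nat list"

definition is_bipartition :: "bipartition \<Rightarrow> bool" where
  "is_bipartition \<mu> \<longleftrightarrow> is_partition (fst \<mu>) \<and> is_partition (snd \<mu>)"

definition diagram :: "nat list \<Rightarrow> (nat \<times> nat) set" where
  "diagram l = {(a, b). 1 \<le> a \<and> a \<le> length l \<and> 1 \<le> b \<and> b \<le> l ! (a - 1)}"

type_synonym node = "nat \<times> nat \<times> nat"

definition nodes :: "bipartition \<Rightarrow> node set" where
  "nodes \<mu> = {(a, b, 1) | a b. (a, b) \<in> diagram (fst \<mu>)}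
           \<union> {(a, b, 2) | a b. (a, b) \<in> diagram (snd \<mu>)}"

definition addable :: "bipartition \<Rightarrow> node \<Rightarrow> bool" where
  "addable \<mu> \<gamma> \<longleftrightarrow> \<gamma> \<notin> nodes \<mu> \<and>
     (\<exists>\<nu>. is_bipartition \<nu> \<and> nodes \<nu> = nodes \<mu> \<union> {\<gamma>})"

definition removable :: "bipartition \<Rightarrow> node \<Rightarrow> bool" where
  "removable \<mu> \<gamma> \<longleftrightarrow> \<gamma> \<in> nodes \<mu> \<and>
     (\<exists>\<nu>. is_bipartition \<nu> \<and> nodes \<nu> = nodes \<mu> - {\<gamma>})"

definition content :: "int \<times> int \<Rightarrow> node \<Rightarrow> int" where
  "content c \<gamma> = (case \<gamma> of (a, b, j) \<Rightarrow>
      int b - int a + (if j = 1 then fst c else snd c))"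

definition residue :: "int \<times> int \<Rightarrow> nat \<Rightarrow> node \<Rightarrow> int" where
  "residue c e \<gamma> = content c \<gamma> mod int e"

text \<open>The addable and removable i-nodes listed in increasing order for
  \<gamma> \<prec> \<gamma>' iff cont < cont' or (cont = cont' and j > j'); the remaining
  components only break ties that cannot occur. True = A, False = R.\<close>
definition i_word :: "int \<times> int \<Rightarrow> nat \<Rightarrow> bipartition \<Rightarrow> nat \<Rightarrow> (node \<times> bool) list" where
  "i_word c e \<mu> i =
     map (\<lambda>(k, nj, \<gamma>, isA). (\<gamma>, isA))
       (sorted_list_of_set
         {(content c \<gamma>, - int (snd (snd \<gamma>)), \<gamma>, addable \<mu> \<gamma>) | \<gamma>.
            (addable \<mu> \<gamma> \<or> removable \<mu> \<gamma>) \<and> residue c e \<gamma> = int i})"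

fun cancel1 :: "(node \<times> bool) list \<Rightarrow> (node \<times> bool) list option" where
  "cancel1 (x # y # xs) =
     (if \<not> snd x \<and> snd y then Some xs else map_option (Cons x) (cancel1 (y # xs)))"
| "cancel1 _ = None"

lemma cancel1_length: "cancel1 w = Some w' \<Longrightarrow> length w' < length w"
  by (induction w arbitrary: w' rule: cancel1.induct) (auto split: if_splits)

function reduce_word :: "(node \<times> bool) list \<Rightarrow> (node \<times> bool) list" where
  "reduce_word w = (case cancel1 w of None \<Rightarrow> w | Some w' \<Rightarrow> reduce_word w')"
  by pat_completeness auto
termination
  by (relation "measure length") (auto dest: cancel1_length)

definition good_addable :: "int \<times> int \<Rightarrow> nat \<Rightarrow> bipartition \<Rightarrow> nat \<Rightarrow> node option" where
  "good_addable c e \<mu> i =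
     (let r = reduce_word (i_word c e \<mu> i) in
      if filter snd r = [] then None else Some (fst (last (filter snd r))))"

definition crystal_edge ::
  "int \<times> int \<Rightarrow> nat \<Rightarrow> bipartition \<Rightarrow> nat \<Rightarrow> bipartition \<Rightarrow> bool" where
  "crystal_edge c e \<mu> i \<nu> \<longleftrightarrow> is_bipartition \<mu> \<and> is_bipartition \<nu> \<and> i < e \<and>
     (\<exists>\<gamma>. good_addable c e \<mu> i = Some \<gamma> \<and> nodes \<nu> = nodes \<mu> \<union> {\<gamma>})"

definition highest_weight :: "int \<times> int \<Rightarrow> nat \<Rightarrow> bipartition \<Rightarrow> bool" where
  "highest_weight c e \<nu> \<longleftrightarrow> is_bipartition \<nu> \<and>
     \<not> (\<exists>\<mu> i. crystal_edge c e \<mu> i \<nu>)"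

end

theory Submission
  imports Defs
begin

text \<open>The vertex \<open>(\<emptyset>, 1\<^sup>m)\<close> can only be reached from \<open>(\<emptyset>, 1\<^sup>m\<^sup>-\<^sup>1)\<close> by adding its
  bottom node \<open>(m,1,2)\<close>, of residue \<open>i\<close> say. The addable nodes of the shorter column are
  \<open>(1,1,1)\<close>, \<open>(m,1,2)\<close> and, for \<open>m \<ge> 2\<close>, \<open>(1,2,2)\<close>; its only removable node
  \<open>(m-1,1,2)\<close> has residue \<open>i + 1 \<noteq> i\<close>, so the \<open>i\<close>-word has no letter \<open>R\<close>, nothing
  cancels, and \<open>(m,1,2)\<close> is good exactly when it is the \<open>\<prec>\<close>-largest addable \<open>i\<close>-node.
  So the vertex is highest weight iff \<open>m = 0\<close>, or \<open>(1,2,2)\<close> is an addable \<open>i\<close>-node, or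
  \<open>(1,1,1)\<close> is an \<open>i\<close>-node of content at least \<open>1 - m\<close>. For the charge
  \<open>(t - (e-1)/2, 0)\<close> the last two conditions read \<open>e | 2m\<close> and \<open>e | 2m + 2t - 1\<close>.\<close>

declare reduce_word.simps [simp del]

lemma cancel1_all_addable: "\<forall>x\<in>set w. snd x \<Longrightarrow> cancel1 w = None"
  by (induction w rule: cancel1.induct) auto

lemma reduce_word_all_addable: "\<forall>x\<in>set w. snd x \<Longrightarrow> reduce_word w = w"
  by (subst reduce_word.simps) (simp add: cancel1_all_addable)

lemma set_cancel1_subset: "cancel1 w = Some w' \<Longrightarrow> set w' \<subseteq> set w"
  by (induction w arbitrary: w' rule: cancel1.induct) (auto split: if_splits)

lemma set_reduce_word_subset: "set (reduce_word w) \<subseteq> set w"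
proof (induction w rule: reduce_word.induct)
  case (1 w)
  then show ?case
    by (cases "cancel1 w") (auto simp: reduce_word.simps[of w] dest!: set_cancel1_subset)
qed

lemma in_set_sorted_list_of_setD: "x \<in> set (sorted_list_of_set S) \<Longrightarrow> x \<in> S"
  by (cases "finite S") auto

lemma good_addable_addable:
  assumes "good_addable c e \<mu> i = Some \<gamma>"
  shows "addable \<mu> \<gamma>" and "residue c e \<gamma> = int i"
proof -
  let ?r = "reduce_word (i_word c e \<mu> i)"
  have "filter snd ?r \<noteq> []" and \<gamma>: "\<gamma> = fst (last (filter snd ?r))"
    using assms by (auto simp: good_addable_def Let_def split: if_splits)
  then have "last (filter snd ?r) \<in> set ?r \<and> snd (last (filter snd ?r))"
    using last_in_set by fastforce
  then have "(\<gamma>, True) \<in> set ?r"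
    unfolding \<gamma> by (cases "last (filter snd ?r)") auto
  then have "(\<gamma>, True) \<in> set (i_word c e \<mu> i)"
    using set_reduce_word_subset by blast
  then show "addable \<mu> \<gamma>" and "residue c e \<gamma> = int i"
    by (auto simp: i_word_def dest!: in_set_sorted_list_of_setD)
qed

lemma last_sorted_list_of_set:
  assumes "finite S" "S \<noteq> {}"
  shows "last (sorted_list_of_set S) = Max S"
proof -
  let ?xs = "sorted_list_of_set S"
  have "?xs \<noteq> []" using assms by simp
  have "y \<le> last ?xs" if "y \<in> S" for y
  proof -
    have "y \<in> set ?xs" using that assms(1) by simp
    then obtain k where k: "k < length ?xs" "y = ?xs ! k"
      unfolding in_set_conv_nth by blast
    then have "?xs ! k \<le> ?xs ! (length ?xs - 1)"
      by (intro sorted_nth_mono) simp_all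
    then show ?thesis using k \<open>?xs \<noteq> []\<close> by (simp add: last_conv_nth)
  qed
  moreover have "last ?xs \<in> S"
    using last_in_set[OF \<open>?xs \<noteq> []\<close>] assms(1) by simp
  ultimately show ?thesis
    using Max_eqI[OF assms(1)] by metis
qed

definition precedence_key :: "int \<times> int \<Rightarrow> node \<Rightarrow> int \<times> int \<times> node" where
  "precedence_key c \<gamma> = (content c \<gamma>, - int (snd (snd \<gamma>)), \<gamma>)"

lemma good_addable_eq_Some_iff_maximal:
  assumes finite: "finite {\<delta>. addable \<mu> \<delta> \<and> residue c e \<delta> = int i}"
    and no_removable: "\<And>\<delta>. removable \<mu> \<delta> \<Longrightarrow> residue c e \<delta> \<noteq> int i"
    and \<gamma>: "addable \<mu> \<gamma>" "residue c e \<gamma> = int i"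
  shows "good_addable c e \<mu> i = Some \<gamma> \<longleftrightarrow>
    (\<forall>\<delta>. addable \<mu> \<delta> \<and> residue c e \<delta> = int i \<longrightarrow> precedence_key c \<delta> \<le> precedence_key c \<gamma>)"
proof -
  define A where "A = {\<delta>. addable \<mu> \<delta> \<and> residue c e \<delta> = int i}"
  define tag where "tag \<delta> = (content c \<delta>, - int (snd (snd \<delta>)), \<delta>, True)" for \<delta>
  have tag_le_iff: "tag \<delta> \<le> tag \<delta>' \<longleftrightarrow> precedence_key c \<delta> \<le> precedence_key c \<delta>'" for \<delta> \<delta>'
    by (auto simp: tag_def precedence_key_def less_eq_prod_def less_prod_def)
  have "{(content c \<delta>, - int (snd (snd \<delta>)), \<delta>, addable \<mu> \<delta>) | \<delta>.
          (addable \<mu> \<delta> \<or> removable \<mu> \<delta>) \<and> residue c e \<delta> = int i} = tag ` A"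
    using no_removable by (auto simp: A_def tag_def)
  then have word: "i_word c e \<mu> i = map (\<lambda>(k, nj, \<delta>, isA). (\<delta>, isA)) (sorted_list_of_set (tag ` A))"
    by (simp add: i_word_def)
  have fin: "finite (tag ` A)"
    using finite unfolding A_def by simp
  have ne: "tag ` A \<noteq> {}"
    using \<gamma> unfolding A_def by blast
  obtain \<gamma>\<^sub>0 where "\<gamma>\<^sub>0 \<in> A" and max: "Max (tag ` A) = tag \<gamma>\<^sub>0"
    using Max_in[OF fin ne] by auto
  have all_addable: "\<forall>x\<in>set (i_word c e \<mu> i). snd x"
    using fin by (auto simp: word tag_def)
  have "last (sorted_list_of_set (tag ` A)) = tag \<gamma>\<^sub>0"
    using last_sorted_list_of_set[OF fin ne] max by simp
  then have good: "good_addable c e \<mu> i = Some \<gamma>\<^sub>0"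
    using fin ne all_addable
    by (simp add: good_addable_def reduce_word_all_addable last_map word tag_def)
  have max_tag: "tag \<delta> \<le> tag \<gamma>\<^sub>0" if "\<delta> \<in> A" for \<delta>
    using Max_ge[OF fin, of "tag \<delta>"] that max by simp
  show ?thesis
  proof
    assume "good_addable c e \<mu> i = Some \<gamma>"
    with good have "\<gamma> = \<gamma>\<^sub>0" by simp
    then show "\<forall>\<delta>. addable \<mu> \<delta> \<and> residue c e \<delta> = int i \<longrightarrow> precedence_key c \<delta> \<le> precedence_key c \<gamma>"
      using max_tag by (simp add: A_def tag_le_iff)
  next
    assume "\<forall>\<delta>. addable \<mu> \<delta> \<and> residue c e \<delta> = int i \<longrightarrow> precedence_key c \<delta> \<le> precedence_key c \<gamma>"
    then have "tag \<gamma>\<^sub>0 \<le> tag \<gamma>"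
      using \<open>\<gamma>\<^sub>0 \<in> A\<close> unfolding A_def tag_le_iff by blast
    moreover have "tag \<gamma> \<le> tag \<gamma>\<^sub>0"
      using max_tag \<gamma> by (simp add: A_def)
    ultimately have "tag \<gamma> = tag \<gamma>\<^sub>0" by simp
    then show "good_addable c e \<mu> i = Some \<gamma>" using good by (simp add: tag_def)
  qed
qed

lemma mem_nodes_iff:
  "(a, b, j) \<in> nodes \<mu> \<longleftrightarrow>
     (j = 1 \<and> (a, b) \<in> diagram (fst \<mu>)) \<or> (j = 2 \<and> (a, b) \<in> diagram (snd \<mu>))"
  by (auto simp: nodes_def)

lemma diagram_down_closed:
  assumes "is_partition l" "(a, b) \<in> diagram l" "1 \<le> a'" "a' \<le> a" "1 \<le> b'" "b' \<le> b"
  shows "(a', b') \<in> diagram l"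
proof -
  have a: "a \<le> length l" "b \<le> l ! (a - 1)" using assms(2) by (auto simp: diagram_def)
  have "l ! (a - 1) \<le> l ! (a' - 1)"
  proof (cases "a' = a")
    case False
    then have "a' - 1 < a - 1" using assms by linarith
    then show ?thesis using assms(1) a by (auto simp: is_partition_def sorted_wrt_iff_nth_less)
  qed simp
  then show ?thesis using assms a by (auto simp: diagram_def)
qed

lemma nodes_down_closed:
  assumes "is_bipartition \<nu>" "(a, b, j) \<in> nodes \<nu>" "1 \<le> a'" "a' \<le> a" "1 \<le> b'" "b' \<le> b"
  shows "(a', b', j) \<in> nodes \<nu>"
  using assms diagram_down_closed[of "fst \<nu>"] diagram_down_closed[of "snd \<nu>"]
  by (auto simp: mem_nodes_iff is_bipartition_def)

definition column :: "nat \<Rightarrow> bipartition" where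
  "column k = ([], replicate k 1)"

lemma mem_nodes_column [simp]:
  "(a, b, j) \<in> nodes (column k) \<longleftrightarrow> b = 1 \<and> j = 2 \<and> 1 \<le> a \<and> a \<le> k"
  by (auto simp: column_def nodes_def diagram_def)

lemma nodes_eqI: "(\<And>a b j. (a, b, j) \<in> nodes \<mu> \<longleftrightarrow> (a, b, j) \<in> N) \<Longrightarrow> nodes \<mu> = N"
  by auto

lemma nodes_column_Suc: "nodes (column (Suc k)) = insert (Suc k, 1, 2) (nodes (column k))"
  by (rule nodes_eqI) auto

lemma nodes_column_plus_corner: "nodes ([1], replicate k 1) = insert (1, 1, 1) (nodes (column k))"
  by (rule nodes_eqI) (auto simp: column_def nodes_def diagram_def)

lemma nodes_column_plus_second_column:
  "nodes ([], 2 # replicate k 1) = insert (1, 2, 2) (nodes (column (Suc k)))"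
  by (rule nodes_eqI) (auto simp: column_def nodes_def diagram_def nth_Cons')

lemma is_bipartition_column: "is_bipartition (column k)"
  and is_bipartition_column_plus_corner: "is_bipartition ([1], replicate k 1)"
  and is_bipartition_column_plus_second_column: "is_bipartition ([], 2 # replicate k 1)"
  by (simp_all add: column_def is_bipartition_def is_partition_def sorted_wrt_iff_nth_less nth_Cons')

lemma addable_column_iff:
  "addable (column k) \<gamma> \<longleftrightarrow> \<gamma> = (1, 1, 1) \<or> \<gamma> = (Suc k, 1, 2) \<or> (k \<ge> 1 \<and> \<gamma> = (1, 2, 2))"
proof
  assume "addable (column k) \<gamma>"
  then obtain \<nu> where new: "\<gamma> \<notin> nodes (column k)" and \<nu>: "is_bipartition \<nu>"
    and nodes_\<nu>: "nodes \<nu> = nodes (column k) \<union> {\<gamma>}"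
    unfolding addable_def by blast
  obtain a b j where \<gamma>: "\<gamma> = (a, b, j)" by (cases \<gamma>)
  have "(a, b, j) \<in> nodes \<nu>" using nodes_\<nu> \<gamma> by simp
  then have pos: "1 \<le> a" "1 \<le> b" "j = 1 \<or> j = 2"
    by (auto simp: mem_nodes_iff diagram_def)
  have below: "(x, y, j) = (a, b, j) \<or> (x, y, j) \<in> nodes (column k)"
    if "1 \<le> x" "x \<le> a" "1 \<le> y" "y \<le> b" for x y
    using nodes_down_closed[OF \<nu> \<open>(a, b, j) \<in> nodes \<nu>\<close> that] nodes_\<nu> \<gamma> by auto
  have left: "j = 2 \<and> b = 1 \<and> a - 1 \<le> k" if "a \<ge> 2"
  proof -
    have "1 \<le> a - 1" "a - 1 \<noteq> a" using that by auto
    then show ?thesis using below[of "a - 1" b] pos by auto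
  qed
  have up: "j = 2 \<and> b = 2 \<and> a \<le> k" if "b \<ge> 2"
  proof -
    have "1 \<le> b - 1" "b - 1 \<noteq> b" using that by auto
    then show ?thesis using below[of a "b - 1"] pos by auto
  qed
  have top_row: "a = 1" if "b \<ge> 2"
    using below[of 1 b] that pos by auto
  show "\<gamma> = (1, 1, 1) \<or> \<gamma> = (Suc k, 1, 2) \<or> (k \<ge> 1 \<and> \<gamma> = (1, 2, 2))"
    using left up top_row pos new \<gamma>
    by (cases "a \<ge> 2"; cases "b \<ge> 2") auto
next
  assume "\<gamma> = (1, 1, 1) \<or> \<gamma> = (Suc k, 1, 2) \<or> (k \<ge> 1 \<and> \<gamma> = (1, 2, 2))"
  then obtain \<nu> where "is_bipartition \<nu>" "nodes \<nu> = insert \<gamma> (nodes (column k))"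
  proof (elim disjE conjE)
    assume "k \<ge> 1" "\<gamma> = (1, 2, 2)"
    then have "nodes ([], 2 # replicate (k - 1) 1) = insert \<gamma> (nodes (column k))"
      using nodes_column_plus_second_column[of "k - 1"] by simp
    then show thesis using that is_bipartition_column_plus_second_column by blast
  qed (use that is_bipartition_column is_bipartition_column_plus_corner nodes_column_Suc
      nodes_column_plus_corner in blast)+
  moreover have "\<gamma> \<notin> nodes (column k)"
    using \<open>\<gamma> = (1, 1, 1) \<or> \<gamma> = (Suc k, 1, 2) \<or> (k \<ge> 1 \<and> \<gamma> = (1, 2, 2))\<close> by auto
  ultimately show "addable (column k) \<gamma>"
    unfolding addable_def by (metis Un_insert_right sup_bot.right_neutral)
qed

lemma removable_column_iff:
  "removable (column k) \<gamma> \<longleftrightarrow> k \<ge> 1 \<and> \<gamma> = (k, 1, 2)"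
proof
  assume "removable (column k) \<gamma>"
  then obtain \<nu> where "\<gamma> \<in> nodes (column k)" and \<nu>: "is_bipartition \<nu>"
    and nodes_\<nu>: "nodes \<nu> = nodes (column k) - {\<gamma>}"
    unfolding removable_def by blast
  then obtain a where \<gamma>: "\<gamma> = (a, 1, 2)" "1 \<le> a" "a \<le> k"
    by (cases \<gamma>) auto
  have "a = k"
  proof (rule ccontr)
    assume "a \<noteq> k"
    then have "(k, 1, 2) \<in> nodes \<nu>" using nodes_\<nu> \<gamma> by auto
    then have "(a, 1, 2) \<in> nodes \<nu>" using nodes_down_closed[OF \<nu> _ \<open>1 \<le> a\<close>] \<gamma> by simp
    then show False using nodes_\<nu> \<gamma> by simp
  qed
  then show "k \<ge> 1 \<and> \<gamma> = (k, 1, 2)" using \<gamma> by simp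
next
  assume "k \<ge> 1 \<and> \<gamma> = (k, 1, 2)"
  then have "nodes (column (k - 1)) = nodes (column k) - {\<gamma>}"
    by auto
  moreover have "\<gamma> \<in> nodes (column k)"
    using \<open>k \<ge> 1 \<and> \<gamma> = (k, 1, 2)\<close> by simp
  ultimately show "removable (column k) \<gamma>"
    using is_bipartition_column unfolding removable_def by blast
qed

lemma good_addable_cong_nodes:
  assumes "nodes \<mu> = nodes \<nu>"
  shows "good_addable c e \<mu> = good_addable c e \<nu>"
proof -
  have "addable \<mu> = addable \<nu>" "removable \<mu> = removable \<nu>"
    using assms by (simp_all add: fun_eq_iff addable_def removable_def)
  then show ?thesis by (simp add: fun_eq_iff good_addable_def i_word_def)
qed

lemma good_addable_column_iff:
  assumes "e \<ge> 2"
  shows "good_addable c e (column k) (nat (residue c e (Suc k, 1, 2))) = Some (Suc k, 1, 2) \<longleftrightarrow>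
    (residue c e (1, 1, 1) = residue c e (Suc k, 1, 2) \<longrightarrow> content c (1, 1, 1) < content c (Suc k, 1, 2)) \<and>
    \<not> (k \<ge> 1 \<and> residue c e (1, 2, 2) = residue c e (Suc k, 1, 2))"
proof -
  let ?\<gamma> = "(Suc k, 1, 2) :: node"
  let ?i = "nat (residue c e ?\<gamma>)"
  have i: "int ?i = residue c e ?\<gamma>" using assms by (simp add: residue_def)
  have finite: "finite {\<delta>. addable (column k) \<delta> \<and> residue c e \<delta> = int ?i}"
    by (rule finite_subset[of _ "{(1, 1, 1), ?\<gamma>, (1, 2, 2)}"]) (auto simp: addable_column_iff)
  have no_removable: "residue c e \<delta> \<noteq> int ?i" if "removable (column k) \<delta>" for \<delta>
  proof
    assume "residue c e \<delta> = int ?i"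
    moreover have "content c \<delta> = content c ?\<gamma> + 1"
      using that by (auto simp: removable_column_iff content_def)
    ultimately have "(content c ?\<gamma> + 1) mod int e = content c ?\<gamma> mod int e"
      using i by (simp add: residue_def)
    then have "int e dvd 1" by (simp add: mod_eq_dvd_iff)
    then show False using assms by simp
  qed
  have \<gamma>: "addable (column k) ?\<gamma>" "residue c e ?\<gamma> = int ?i"
    using i by (simp_all add: addable_column_iff)
  have "good_addable c e (column k) ?i = Some ?\<gamma> \<longleftrightarrow>
    (\<forall>\<delta>. addable (column k) \<delta> \<and> residue c e \<delta> = int ?i \<longrightarrow> precedence_key c \<delta> \<le> precedence_key c ?\<gamma>)"
    by (rule good_addable_eq_Some_iff_maximal[OF finite no_removable \<gamma>])
  moreover have "precedence_key c (1, 1, 1) \<le> precedence_key c ?\<gamma> \<longleftrightarrow> content c (1, 1, 1) < content c ?\<gamma>"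
    by (auto simp: precedence_key_def less_eq_prod_def)
  moreover have "\<not> precedence_key c (1, 2, 2) \<le> precedence_key c ?\<gamma>" if "k \<ge> 1"
    using that by (auto simp: precedence_key_def less_eq_prod_def content_def)
  ultimately show ?thesis
    unfolding addable_column_iff i by blast
qed

lemma crystal_edge_into_column_iff:
  assumes "e \<ge> 1"
  shows "(\<exists>\<mu> i. crystal_edge c e \<mu> i (column m)) \<longleftrightarrow>
    m \<ge> 1 \<and> good_addable c e (column (m - 1)) (nat (residue c e (m, 1, 2))) = Some (m, 1, 2)"
proof
  assume "\<exists>\<mu> i. crystal_edge c e \<mu> i (column m)"
  then obtain \<mu> i \<gamma> where \<mu>: "is_bipartition \<mu>" and good: "good_addable c e \<mu> i = Some \<gamma>"
    and nodes_m: "nodes (column m) = nodes \<mu> \<union> {\<gamma>}"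
    unfolding crystal_edge_def by blast
  have "\<gamma> \<notin> nodes \<mu>" using good_addable_addable(1)[OF good] by (simp add: addable_def)
  then have nodes_\<mu>: "nodes \<mu> = nodes (column m) - {\<gamma>}" using nodes_m by auto
  then have "removable (column m) \<gamma>"
    using \<mu> nodes_m unfolding removable_def by blast
  then have m: "m \<ge> 1" and \<gamma>: "\<gamma> = (m, 1, 2)"
    by (simp_all add: removable_column_iff)
  have "nodes \<mu> = nodes (column (m - 1))"
    using nodes_\<mu> nodes_column_Suc[of "m - 1"] m \<gamma> by auto
  then have "good_addable c e (column (m - 1)) i = Some \<gamma>"
    using good good_addable_cong_nodes by metis
  moreover have "i = nat (residue c e \<gamma>)"
    using good_addable_addable(2)[OF good] by simp
  ultimately show "m \<ge> 1 \<and> good_addable c e (column (m - 1)) (nat (residue c e (m, 1, 2))) = Some (m, 1, 2)"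
    using m \<gamma> by simp
next
  assume edge: "m \<ge> 1 \<and> good_addable c e (column (m - 1)) (nat (residue c e (m, 1, 2))) = Some (m, 1, 2)"
  moreover have "nat (residue c e (m, 1, 2)) < e"
    using assms by (simp add: residue_def nat_less_iff)
  moreover have "nodes (column m) = nodes (column (m - 1)) \<union> {(m, 1, 2)}"
    using nodes_column_Suc[of "m - 1"] edge by simp
  ultimately have "crystal_edge c e (column (m - 1)) (nat (residue c e (m, 1, 2))) (column m)"
    unfolding crystal_edge_def using is_bipartition_column by blast
  then show "\<exists>\<mu> i. crystal_edge c e \<mu> i (column m)" by blast
qed

lemma highest_weight_column_iff:
  assumes "e \<ge> 2"
  shows "highest_weight c e (column m) \<longleftrightarrow> m = 0 \<or>
    (residue c e (1, 1, 1) = residue c e (m, 1, 2) \<and> content c (m, 1, 2) \<le> content c (1, 1, 1)) \<or>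
    (m \<ge> 2 \<and> residue c e (1, 2, 2) = residue c e (m, 1, 2))"
proof -
  have "highest_weight c e (column m) \<longleftrightarrow>
      \<not> (m \<ge> 1 \<and> good_addable c e (column (m - 1)) (nat (residue c e (m, 1, 2))) = Some (m, 1, 2))"
    using assms crystal_edge_into_column_iff[of e c m]
    by (simp add: highest_weight_def is_bipartition_column)
  then show ?thesis
    using good_addable_column_iff[OF assms, of c "m - 1"] by (cases m) auto
qed

lemma mod_eq_and_le_iff_dvd:
  fixes e q m t :: int
  assumes e: "e = 2 * q + 1" and pos: "m + t \<ge> 1"
  shows "(t - q) mod e = (1 - m) mod e \<and> 1 - m \<le> t - q \<longleftrightarrow> e dvd 2 * m + 2 * t - 1"
proof -
  have "coprime e 2" using e by simp
  have "(t - q) mod e = (1 - m) mod e \<longleftrightarrow> e dvd (t - q) - (1 - m)"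
    by (rule mod_eq_dvd_iff)
  also have "\<dots> \<longleftrightarrow> e dvd 2 * ((t - q) - (1 - m))"
    by (rule coprime_dvd_mult_right_iff[OF \<open>coprime e 2\<close>, symmetric])
  also have "2 * ((t - q) - (1 - m)) = (2 * m + 2 * t - 1) - e"
    using e by simp
  finally have "(t - q) mod e = (1 - m) mod e \<longleftrightarrow> e dvd 2 * m + 2 * t - 1"
    by (simp add: dvd_diff_left_iff)
  moreover have "e \<le> 2 * m + 2 * t - 1" if "e dvd 2 * m + 2 * t - 1"
    using zdvd_imp_le[OF that] pos by simp
  ultimately show ?thesis using e by auto
qed

lemma mod_eq_one_iff_dvd_double:
  fixes e q m :: int
  assumes e: "e = 2 * q + 1" and "q \<ge> 1" and "m \<ge> 1"
  shows "m \<ge> 2 \<and> 1 mod e = (1 - m) mod e \<longleftrightarrow> e dvd 2 * m"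
proof -
  have "1 mod e = (1 - m) mod e \<longleftrightarrow> e dvd 2 * m"
    using e by (simp add: mod_eq_dvd_iff coprime_dvd_mult_right_iff)
  moreover have "e \<le> m" if "e dvd 2 * m"
    using that e assms(3) by (simp add: coprime_dvd_mult_right_iff zdvd_imp_le)
  ultimately show ?thesis using assms by auto
qed

theorem proposition7p5:
  fixes e m t :: nat
  assumes "e \<ge> 3" and "odd e" and "t \<in> {0, 1}"
  shows "highest_weight (int t + (1 - int e) div 2, 0) e ([], replicate m 1)
         \<longleftrightarrow> (int e dvd 2 * int m + int t \<or> int e dvd 2 * int m + int t - 1)"
proof -
  obtain n where "e = 2 * n + 1" using assms(2) oddE by blast
  define q where "q = int n"
  have e: "int e = 2 * q + 1" and q: "q \<ge> 1"
    using \<open>e = 2 * n + 1\<close> assms(1) by (simp_all add: q_def)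
  have charge: "int t + (1 - int e) div 2 = int t - q" using e by simp
  have "highest_weight (int t - q, 0) e (column m) \<longleftrightarrow>
      m = 0 \<or> int e dvd 2 * int m + 2 * int t - 1 \<or> int e dvd 2 * int m"
    using highest_weight_column_iff[of e "(int t - q, 0)" m] assms(1)
      mod_eq_and_le_iff_dvd[OF e, of "int m" "int t"] mod_eq_one_iff_dvd_double[OF e q, of "int m"]
    by (cases "m = 0") (auto simp: residue_def content_def)
  then show ?thesis
    using assms(3) by (auto simp: charge column_def add.commute)
qed

end
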